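(* Let $S$ be an irreducible numerical semigroup with Frobenius number $F$, and let $x$ be a minimal generator of $S$ such that: (1) $x<F$; (2) $2x-F\notin S$; (3) $3x\neq 2F$; (4) $4x\neq 3F$. Then $\overline{S}=(S\setminus\{x\})\cup\{F-x\}$ is an irreducible numerical semigroup with Frobenius number $F$.
   Context: A numerical semigroup is a subset $S\subseteq\mathbb{N}$ (with $\mathbb{N}$ the set of nonnegative integers) closed under addition, containing $0$, with $\mathbb{N}\setminus S$ finite. Its Frobenius number $\mathrm{F}(S)$ is the largest integer not in $S$. Every numerical semigroup has a unique minimal system of generators (a finite set $A$ with $S$ equal to the submonoid of $(\mathbb{N},+)$ generated by $A$, minimal with respect to inclusion); its elements are the minimal generators of $S$. A numerical semigroup is irreducible if it cannot be expressed as the intersection of two numerical semigroups properly containing it. *)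

theory Defs
  imports Main
begin

definition numerical_semigroup :: "nat set \<Rightarrow> bool" where
  "numerical_semigroup S \<longleftrightarrow> 0 \<in> S \<and> (\<forall>a\<in>S. \<forall>b\<in>S. a + b \<in> S) \<and> finite (UNIV - S)"

definition frobenius :: "nat set \<Rightarrow> int" where
  "frobenius S = (if S = UNIV then -1 else int (Max (UNIV - S)))"

inductive_set generated :: "nat set \<Rightarrow> nat set" for A where
  gen_zero: "0 \<in> generated A"
| gen_add: "a \<in> A \<Longrightarrow> s \<in> generated A \<Longrightarrow> a + s \<in> generated A"

definition minimal_system_of_generators :: "nat set \<Rightarrow> nat set \<Rightarrow> bool" where
  "minimal_system_of_generators S A \<longleftrightarrow>
     finite A \<and> generated A = S \<and> (\<forall>B. B \<subset> A \<longrightarrow> generated B \<noteq> S)"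

definition minimal_generator :: "nat set \<Rightarrow> nat \<Rightarrow> bool" where
  "minimal_generator S x \<longleftrightarrow> (\<exists>A. minimal_system_of_generators S A \<and> x \<in> A)"

definition irreducible_ns :: "nat set \<Rightarrow> bool" where
  "irreducible_ns S \<longleftrightarrow> numerical_semigroup S \<and>
     \<not> (\<exists>S1 S2. numerical_semigroup S1 \<and> numerical_semigroup S2 \<and>
            S \<subset> S1 \<and> S \<subset> S2 \<and> S = S1 \<inter> S2)"

end

theory Submission
  imports Defs
begin

(* Write F for the Frobenius number of S and f = F - x.
   An irreducible numerical semigroup is characterised by its gaps: every gap h
   with 2h <> F satisfies F - h in S ("reflected gaps"); conversely a numerical
   semigroup T with F not in T whose gaps are reflected about F is irreducible,
   because every numerical semigroup properly containing T must contain F. *)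

lemma generated_self: "a \<in> A \<Longrightarrow> a \<in> generated A"
  using generated.gen_add[OF _ generated.gen_zero] by fastforce

lemma generated_add_closed:
  "a \<in> generated A \<Longrightarrow> b \<in> generated A \<Longrightarrow> a + b \<in> generated A"
  by (induction rule: generated.induct) (auto simp: add.assoc intro: generated.intros)

lemma generated_below_remove:
  "n \<in> generated A \<Longrightarrow> n < x \<Longrightarrow> n \<in> generated (A - {x})"
  by (induction rule: generated.induct) (auto intro: generated.intros)

lemma generated_insert_redundant:
  assumes "a \<in> generated B"
  shows "generated (insert a B) = generated B"
proof
  show "generated (insert a B) \<subseteq> generated B"
  proof
    fix n assume "n \<in> generated (insert a B)"
    then show "n \<in> generated B"
      by (induction rule: generated.induct)
         (auto intro: generated.intros generated_add_closed generated_self assms)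
  qed
  show "generated B \<subseteq> generated (insert a B)"
  proof
    fix n assume "n \<in> generated B"
    then show "n \<in> generated (insert a B)"
      by (induction rule: generated.induct) (auto intro: generated.intros)
  qed
qed

definition indecomposable :: "nat set \<Rightarrow> nat \<Rightarrow> bool" where
  "indecomposable S x \<longleftrightarrow> x \<in> S \<and> x \<noteq> 0 \<and>
     (\<forall>a\<in>S. \<forall>b\<in>S. a + b = x \<longrightarrow> a = 0 \<or> b = 0)"

text \<open>A minimal generator cannot be generated by the remaining generators;
  this rules out both x = 0 and any nontrivial decomposition of x.\<close>
lemma minimal_generator_indecomposable:
  assumes "minimal_generator S x"
  shows "indecomposable S x"
proof -
  obtain A where gen: "generated A = S" and x: "x \<in> A"
    and min: "\<And>B. B \<subset> A \<Longrightarrow> generated B \<noteq> S"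
    using assms unfolding minimal_generator_def minimal_system_of_generators_def by blast
  have not_redundant: "x \<notin> generated (A - {x})"
  proof
    assume "x \<in> generated (A - {x})"
    then have "generated (A - {x}) = S"
      using generated_insert_redundant[of x "A - {x}"] gen x by (simp add: insert_absorb)
    moreover have "A - {x} \<subset> A" using x by blast
    ultimately show False using min by blast
  qed
  have "x \<noteq> 0" using not_redundant generated.gen_zero by metis
  moreover have "a = 0 \<or> b = 0" if "a \<in> S" "b \<in> S" "a + b = x" for a b
  proof (rule ccontr)
    assume "\<not> (a = 0 \<or> b = 0)"
    then have "a \<in> generated (A - {x})" "b \<in> generated (A - {x})"
      using that gen generated_below_remove by auto
    then show False using not_redundant generated_add_closed that(3) by blast
  qed
  moreover have "x \<in> S" using gen x generated_self by blast
  ultimately show ?thesis unfolding indecomposable_def by blast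
qed

lemma gap_le_Max: "finite (UNIV - S) \<Longrightarrow> y \<notin> S \<Longrightarrow> y \<le> Max (UNIV - S)"
  by (simp add: Max_ge)

lemma Max_gap_notin: "finite (UNIV - S) \<Longrightarrow> S \<noteq> UNIV \<Longrightarrow> Max (UNIV - S) \<notin> S"
  using Max_in[of "UNIV - S"] by auto

lemma frobenius_eqI:
  assumes "F \<notin> T" and "\<And>y. y \<notin> T \<Longrightarrow> y \<le> F"
  shows "frobenius T = int F"
proof -
  have "Max (UNIV - T) = F"
    by (rule Max_eqI) (use assms in \<open>auto intro: finite_subset[of _ "{..F}"]\<close>)
  with assms(1) show ?thesis unfolding frobenius_def by auto
qed

lemma numerical_semigroup_insert:
  assumes ns: "numerical_semigroup T" and double: "h + h \<in> T"
    and shift: "\<And>b. b \<in> T \<Longrightarrow> b \<noteq> 0 \<Longrightarrow> h + b \<in> T"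
  shows "numerical_semigroup (insert h T)"
proof -
  have "a + b \<in> insert h T" if "a \<in> insert h T" "b \<in> insert h T" for a b
    using that ns double shift[of a] shift[of b]
    by (cases "a = 0"; cases "b = 0") (auto simp: numerical_semigroup_def add.commute)
  then show ?thesis using ns by (auto simp: numerical_semigroup_def intro: finite_subset)
qed

lemma numerical_semigroup_remove_indecomposable:
  assumes "numerical_semigroup S" and "indecomposable S x"
  shows "numerical_semigroup (S - {x})"
proof -
  have "a + b \<noteq> x" if "a \<in> S - {x}" "b \<in> S - {x}" for a b
    using assms(2) that unfolding indecomposable_def by fastforce
  then show ?thesis
    using assms unfolding numerical_semigroup_def indecomposable_def
    by (auto intro: finite_subset[of _ "insert x (UNIV - S)"])
qed

lemma numerical_semigroup_insert_Frobenius: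
  assumes ns: "numerical_semigroup S" and ne: "S \<noteq> UNIV"
  shows "numerical_semigroup (insert (Max (UNIV - S)) S)"
proof -
  let ?F = "Max (UNIV - S)"
  have fin: "finite (UNIV - S)" using ns by (simp add: numerical_semigroup_def)
  have above: "y \<in> S" if "y > ?F" for y using gap_le_Max[OF fin, of y] that by linarith
  have "0 \<in> S" using ns by (simp add: numerical_semigroup_def)
  then have "?F \<noteq> 0" using Max_gap_notin[OF fin ne] by metis
  then show ?thesis by (intro numerical_semigroup_insert[OF ns] above) auto
qed

section \<open>Irreducibility via reflected gaps\<close>

definition reflected_gaps :: "nat set \<Rightarrow> nat \<Rightarrow> bool" where
  "reflected_gaps S F \<longleftrightarrow> (\<forall>h. h \<notin> S \<longrightarrow> 2 * h \<noteq> F \<longrightarrow> h \<le> F \<and> F - h \<in> S)"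

lemma irreducible_no_two_extensions:
  assumes "irreducible_ns S" "h \<notin> S" "k \<notin> S" "h \<noteq> k"
    and "numerical_semigroup (insert h S)" "numerical_semigroup (insert k S)"
  shows False
proof -
  have "S = insert h S \<inter> insert k S" using assms(2-4) by auto
  moreover have "S \<subset> insert h S" "S \<subset> insert k S" using assms(2,3) by auto
  ultimately show False using assms(1,5,6) unfolding irreducible_ns_def by blast
qed

text \<open>Necessity: take a maximal non-reflected gap h0; then S plus h0 and S plus F
  are two different one-element extensions, contradicting irreducibility.\<close>
lemma irreducible_reflected_gaps:
  assumes irr: "irreducible_ns S" and ne: "S \<noteq> UNIV"
  shows "reflected_gaps S (Max (UNIV - S))"
proof -
  define F where "F = Max (UNIV - S)"
  have ns: "numerical_semigroup S" using irr by (simp add: irreducible_ns_def)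
  then have fin: "finite (UNIV - S)" and closed: "\<And>a b. a \<in> S \<Longrightarrow> b \<in> S \<Longrightarrow> a + b \<in> S"
    and zero: "0 \<in> S" by (auto simp: numerical_semigroup_def)
  have gap_le: "y \<le> F" if "y \<notin> S" for y using gap_le_Max[OF fin that] F_def by simp
  have reflect: "F - h \<in> S" if h: "h \<notin> S" "2 * h \<noteq> F" for h
  proof (rule ccontr)
    assume "F - h \<notin> S"
    define M where "M = {y. y \<notin> S \<and> F - y \<notin> S \<and> 2 * y \<noteq> F}"
    have finM: "finite M" using fin by (rule rev_finite_subset) (auto simp: M_def)
    define h0 where "h0 = Max M"
    have h0M: "h0 \<in> M" using Max_in[OF finM] h \<open>F - h \<notin> S\<close> h0_def M_def by blast
    have h0_max: "y \<le> h0" if "y \<in> M" for y using Max_ge[OF finM that] h0_def by simp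
    have "F - h0 \<in> M" using h0M gap_le[of h0] unfolding M_def by auto
    then have h0_large: "F < 2 * h0" using h0_max[of "F - h0"] h0M M_def by auto
    have "h0 + b \<in> S" if "b \<in> S" "b \<noteq> 0" for b
    proof (rule ccontr)
      assume out: "h0 + b \<notin> S"
      have "F - (h0 + b) + b = F - h0" using gap_le[OF out] by simp
      then have "F - (h0 + b) \<notin> S" using closed[OF _ that(1)] h0M M_def by force
      then have "h0 + b \<in> M" using out h0_large unfolding M_def by auto
      then show False using h0_max that(2) by fastforce
    qed
    moreover have "h0 + h0 \<in> S" using gap_le[of "h0 + h0"] h0_large by linarith
    ultimately have "numerical_semigroup (insert h0 S)"
      by (intro numerical_semigroup_insert[OF ns])
    moreover have "h0 \<noteq> F" using h0M zero M_def by auto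
    ultimately show False
      using irreducible_no_two_extensions[OF irr, of h0 F] h0M M_def
        numerical_semigroup_insert_Frobenius[OF ns ne] Max_gap_notin[OF fin ne] F_def
      by auto
  qed
  show ?thesis unfolding reflected_gaps_def F_def[symmetric] using gap_le reflect by blast
qed

lemma reflected_gaps_proper_superset:
  assumes ns1: "numerical_semigroup T1" and sub: "T \<subset> T1" and refl: "reflected_gaps T F"
  shows "F \<in> T1"
proof -
  obtain h where h: "h \<in> T1" "h \<notin> T" using sub by blast
  have closed: "\<And>a b. a \<in> T1 \<Longrightarrow> b \<in> T1 \<Longrightarrow> a + b \<in> T1"
    using ns1 by (simp add: numerical_semigroup_def)
  show ?thesis
  proof (cases "2 * h = F")
    case True then show ?thesis using closed[OF h(1) h(1)] by (simp add: mult_2)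
  next
    case False
    then have "F - h \<in> T1" "h \<le> F" using refl h(2) sub unfolding reflected_gaps_def by auto
    then show ?thesis using closed[OF h(1), of "F - h"] by simp
  qed
qed

lemma reflected_gaps_irreducible:
  assumes "numerical_semigroup T" "F \<notin> T" "reflected_gaps T F"
  shows "irreducible_ns T"
  using assms reflected_gaps_proper_superset[OF _ _ assms(3)]
  unfolding irreducible_ns_def by blast

section \<open>The exchange step\<close>

locale exchange =
  fixes S :: "nat set" and F x :: nat
  assumes ns: "numerical_semigroup S"
    and refl: "reflected_gaps S F"
    and F_gap: "F \<notin> S"
    and atom: "indecomposable S x"
    and x_below: "x < F"
    and no_half: "\<And>s. s \<in> S \<Longrightarrow> s + F \<noteq> 2 * x"
    and not_3x: "3 * x \<noteq> 2 * F"
    and not_4x: "4 * x \<noteq> 3 * F"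
begin

lemma closed: "a \<in> S \<Longrightarrow> b \<in> S \<Longrightarrow> a + b \<in> S"
  using ns by (simp add: numerical_semigroup_def)

lemma gap_reflect: "h \<notin> S \<Longrightarrow> 2 * h \<noteq> F \<Longrightarrow> h \<le> F \<and> F - h \<in> S"
  using refl by (simp add: reflected_gaps_def)

lemma double_in: "(F - x) + (F - x) \<in> S - {x}"
proof -
  have "(F - x) + (F - x) \<in> S"
  proof (rule ccontr)
    assume out: "(F - x) + (F - x) \<notin> S"
    have "2 * ((F - x) + (F - x)) \<noteq> F" using not_4x x_below by auto
    then have "F - ((F - x) + (F - x)) \<in> S" "(F - x) + (F - x) \<le> F"
      using gap_reflect[OF out] by auto
    moreover have "F - ((F - x) + (F - x)) + F = 2 * x" using calculation(2) x_below by auto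
    ultimately show False using no_half by blast
  qed
  moreover have "(F - x) + (F - x) \<noteq> x" using not_3x x_below by auto
  ultimately show ?thesis by simp
qed

text \<open>f + b stays in S - {x} for nonzero b in S - {x}; otherwise the reflected gap
  x - b would decompose x, or 2x - F would lie in S.\<close>
lemma shift_in:
  assumes b: "b \<in> S - {x}" "b \<noteq> 0"
  shows "(F - x) + b \<in> S - {x}"
proof -
  have "(F - x) + b \<in> S"
  proof (rule ccontr)
    assume out: "(F - x) + b \<notin> S"
    show False
    proof (cases "2 * ((F - x) + b) = F")
      case True
      then have "(b + b) + F = 2 * x" using x_below by simp
      then show False using no_half closed b by blast
    next
      case False
      then have le: "(F - x) + b \<le> F" and "F - ((F - x) + b) \<in> S"
        using gap_reflect[OF out] by auto
      moreover have "F - ((F - x) + b) = x - b" using le x_below by auto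
      ultimately have "x - b \<in> S" "b + (x - b) = x" by auto
      then show False using atom b unfolding indecomposable_def by fastforce
    qed
  qed
  moreover have "(F - x) + b \<noteq> x" using no_half[of b] b x_below by auto
  ultimately show ?thesis by simp
qed

lemma exchanged_numerical_semigroup:
  "numerical_semigroup (insert (F - x) (S - {x}))"
  using numerical_semigroup_insert[OF numerical_semigroup_remove_indecomposable[OF ns atom]]
    double_in shift_in by blast

text \<open>The gaps of the exchanged semigroup are those of S except f, plus x = F - f.\<close>
lemma exchanged_reflected_gaps: "reflected_gaps (insert (F - x) (S - {x})) F"
  unfolding reflected_gaps_def
proof (intro allI impI)
  fix h assume h: "h \<notin> insert (F - x) (S - {x})" "2 * h \<noteq> F"
  show "h \<le> F \<and> F - h \<in> insert (F - x) (S - {x})"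
  proof (cases "h = x")
    case True then show ?thesis using x_below by auto
  next
    case False
    then have "h \<le> F" "F - h \<in> S" using h gap_reflect by auto
    moreover have "F - h \<noteq> x" using calculation(1) h(1) by auto
    ultimately show ?thesis by auto
  qed
qed

lemma exchanged_F_gap: "F \<notin> insert (F - x) (S - {x})"
proof -
  have "x \<noteq> 0" using atom by (simp add: indecomposable_def)
  then show ?thesis using F_gap x_below by auto
qed

lemma exchanged_frobenius: "frobenius (insert (F - x) (S - {x})) = int F"
proof (rule frobenius_eqI[OF exchanged_F_gap])
  show "y \<le> F" if "y \<notin> insert (F - x) (S - {x})" for y
    using that gap_reflect[of y] x_below by (cases "2 * y = F") auto
qed

end

theorem proposition5:
  fixes S :: "nat set" and x :: nat
  assumes "irreducible_ns S"
    and "minimal_generator S x"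
    and "int x < frobenius S"
    and "\<not> (\<exists>s\<in>S. int s = 2 * int x - frobenius S)"
    and "3 * int x \<noteq> 2 * frobenius S"
    and "4 * int x \<noteq> 3 * frobenius S"
  shows "irreducible_ns ((S - {x}) \<union> {nat (frobenius S - int x)})
       \<and> frobenius ((S - {x}) \<union> {nat (frobenius S - int x)}) = frobenius S"
proof -
  define F where "F = Max (UNIV - S)"
  have ns: "numerical_semigroup S" using assms(1) by (simp add: irreducible_ns_def)
  have ne: "S \<noteq> UNIV" using assms(3) by (auto simp: frobenius_def)
  have frob: "frobenius S = int F" using ne by (simp add: frobenius_def F_def)
  interpret exchange S F x
  proof
    show "F \<notin> S" using Max_gap_notin[of S] ns ne unfolding F_def numerical_semigroup_def by blast
    show "reflected_gaps S F" using irreducible_reflected_gaps[OF assms(1) ne] F_def by simp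
    show "indecomposable S x" using minimal_generator_indecomposable[OF assms(2)] .
    show "s + F \<noteq> 2 * x" if "s \<in> S" for s using assms(4) that frob by force
  qed (use ns assms(3,5,6) frob in auto)
  have T: "(S - {x}) \<union> {nat (int F - int x)} = insert (F - x) (S - {x})"
    using x_below by auto
  show ?thesis
    unfolding frob T
    using reflected_gaps_irreducible[OF exchanged_numerical_semigroup exchanged_F_gap
        exchanged_reflected_gaps] exchanged_frobenius by blast
qed

end
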